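(* Let $A$ be an $m\times n$ polyomino. Then the diagram of $A$ is (the set of positions of) a Ferrers array $F$, and the ranked essential set of $A$ consists of the lower right corners of $F$, each with rank $0$. Furthermore, for nonnegative integral vectors $R,S$, a polyomino $A\in\mathcal{C}_{m,n}(R,S)$ is uniquely determined by its ranked essential set; that is, two polyominoes in $\mathcal{C}_{m,n}(R,S)$ with the same ranked essential set are equal.
   Context: A $(0,1)$-matrix is convex if in every row and every column the 1's occur consecutively. It is connected if it has no zero row and no zero column and every two 1's are joined by a path of 1's in which consecutive 1's are horizontally or vertically adjacent. A polyomino is a connected convex $(0,1)$-matrix. $\mathcal{C}_{m,n}(R,S)$ is the set of convex $m\times n$ $(0,1)$-matrices with row sum vector $R$ and column sum vector $S$. A Ferrers array $F(U)$ for a nonincreasing nonnegative integer vector $U=(u_1,\dots,u_m)$ is the set of positions $\{(i,j): 1\le j\le u_i\}$ (left-justified rows of lengths $u_i$); its lower right corners are the positions $(i,u_i)$ with $u_i>u_{i+1}$ (where $u_{m+1}=0$). The diagram of an $m\times n$ $(0,1)$-matrix $A$: for each 1 of $A$ at $(i,j)$ shade all positions $(i,j')$, $j'\ge j$, and $(i',j)$, $i'\ge i$; the diagram is the set of unshaded positions. The essential set is the set of positions $(i,j)$ of the diagram such that neither $(i+1,j)$ nor $(i,j+1)$ lies in the diagram; the ranked essential set consists of the triples $(i,j;r)$ with $(i,j)$ in the essential set and $r$ the number of 1's of $A$ in rows $1,\dots,i$ and columns $1,\dots,j$. *)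

theory Defs
  imports Main
begin

text \<open>An m x n (0,1)-matrix is represented by A :: nat => nat => bool with
  1-based indices: A i j means entry (i,j) is 1; entries outside
  {1..m} x {1..n} are required to be 0 (False).\<close>

definition is_01mat :: "nat \<Rightarrow> nat \<Rightarrow> (nat \<Rightarrow> nat \<Rightarrow> bool) \<Rightarrow> bool" where
  "is_01mat m n A \<longleftrightarrow> (\<forall>i j. A i j \<longrightarrow> 1 \<le> i \<and> i \<le> m \<and> 1 \<le> j \<and> j \<le> n)"

definition convex_mat :: "nat \<Rightarrow> nat \<Rightarrow> (nat \<Rightarrow> nat \<Rightarrow> bool) \<Rightarrow> bool" where
  "convex_mat m n A \<longleftrightarrow>
     (\<forall>i\<in>{1..m}. \<forall>j1 j j2. 1 \<le> j1 \<and> j1 \<le> j \<and> j \<le> j2 \<and> j2 \<le> n \<and> A i j1 \<and> A i j2 \<longrightarrow> A i j) \<and>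
     (\<forall>j\<in>{1..n}. \<forall>i1 i i2. 1 \<le> i1 \<and> i1 \<le> i \<and> i \<le> i2 \<and> i2 \<le> m \<and> A i1 j \<and> A i2 j \<longrightarrow> A i j)"

definition ones :: "nat \<Rightarrow> nat \<Rightarrow> (nat \<Rightarrow> nat \<Rightarrow> bool) \<Rightarrow> (nat \<times> nat) set" where
  "ones m n A = {(i, j). 1 \<le> i \<and> i \<le> m \<and> 1 \<le> j \<and> j \<le> n \<and> A i j}"

definition adj_ones :: "nat \<Rightarrow> nat \<Rightarrow> (nat \<Rightarrow> nat \<Rightarrow> bool) \<Rightarrow> ((nat \<times> nat) \<times> (nat \<times> nat)) set" where
  "adj_ones m n A = {((i, j), (i', j')). (i, j) \<in> ones m n A \<and> (i', j') \<in> ones m n A \<and>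
       ((i = i' \<and> (j' = j + 1 \<or> j = j' + 1)) \<or> (j = j' \<and> (i' = i + 1 \<or> i = i' + 1)))}"

definition connected_mat :: "nat \<Rightarrow> nat \<Rightarrow> (nat \<Rightarrow> nat \<Rightarrow> bool) \<Rightarrow> bool" where
  "connected_mat m n A \<longleftrightarrow>
     (\<forall>i\<in>{1..m}. \<exists>j\<in>{1..n}. A i j) \<and>
     (\<forall>j\<in>{1..n}. \<exists>i\<in>{1..m}. A i j) \<and>
     (\<forall>p\<in>ones m n A. \<forall>q\<in>ones m n A. (p, q) \<in> (adj_ones m n A)\<^sup>*)"

definition polyomino :: "nat \<Rightarrow> nat \<Rightarrow> (nat \<Rightarrow> nat \<Rightarrow> bool) \<Rightarrow> bool" where
  "polyomino m n A \<longleftrightarrow> is_01mat m n A \<and> convex_mat m n A \<and> connected_mat m n A"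

definition convex_class :: "nat \<Rightarrow> nat \<Rightarrow> (nat \<Rightarrow> nat) \<Rightarrow> (nat \<Rightarrow> nat) \<Rightarrow> (nat \<Rightarrow> nat \<Rightarrow> bool) set" where
  "convex_class m n R S = {A. is_01mat m n A \<and> convex_mat m n A \<and>
      (\<forall>i\<in>{1..m}. card {j\<in>{1..n}. A i j} = R i) \<and>
      (\<forall>j\<in>{1..n}. card {i\<in>{1..m}. A i j} = S j)}"

text \<open>Ferrers array F(U) for U = (U 1, ..., U m), and its lower right corners
  (with the convention U (m+1) = 0).\<close>
definition ferrers :: "nat \<Rightarrow> (nat \<Rightarrow> nat) \<Rightarrow> (nat \<times> nat) set" where
  "ferrers m U = {(i, j). 1 \<le> i \<and> i \<le> m \<and> 1 \<le> j \<and> j \<le> U i}"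

definition nonincr_vec :: "nat \<Rightarrow> (nat \<Rightarrow> nat) \<Rightarrow> bool" where
  "nonincr_vec m U \<longleftrightarrow> (\<forall>i. 1 \<le> i \<and> i < m \<longrightarrow> U (i + 1) \<le> U i)"

definition lr_corners :: "nat \<Rightarrow> (nat \<Rightarrow> nat) \<Rightarrow> (nat \<times> nat) set" where
  "lr_corners m U = {(i, U i) | i. 1 \<le> i \<and> i \<le> m \<and> (if i = m then 0 else U (i + 1)) < U i}"

text \<open>Diagram: positions not shaded, where a 1 at (i,j) shades (i,j') for j' >= j
  and (i',j) for i' >= i.\<close>
definition diagram :: "nat \<Rightarrow> nat \<Rightarrow> (nat \<Rightarrow> nat \<Rightarrow> bool) \<Rightarrow> (nat \<times> nat) set" where
  "diagram m n A = {(i, j). 1 \<le> i \<and> i \<le> m \<and> 1 \<le> j \<and> j \<le> n \<and>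
      \<not> (\<exists>j'. 1 \<le> j' \<and> j' \<le> j \<and> A i j') \<and> \<not> (\<exists>i'. 1 \<le> i' \<and> i' \<le> i \<and> A i' j)}"

definition essential_set :: "nat \<Rightarrow> nat \<Rightarrow> (nat \<Rightarrow> nat \<Rightarrow> bool) \<Rightarrow> (nat \<times> nat) set" where
  "essential_set m n A = {(i, j). (i, j) \<in> diagram m n A \<and>
      (i + 1, j) \<notin> diagram m n A \<and> (i, j + 1) \<notin> diagram m n A}"

definition rank_at :: "(nat \<Rightarrow> nat \<Rightarrow> bool) \<Rightarrow> nat \<Rightarrow> nat \<Rightarrow> nat" where
  "rank_at A i j = card {(i', j'). 1 \<le> i' \<and> i' \<le> i \<and> 1 \<le> j' \<and> j' \<le> j \<and> A i' j'}"

definition ranked_essential_set :: "nat \<Rightarrow> nat \<Rightarrow> (nat \<Rightarrow> nat \<Rightarrow> bool) \<Rightarrow> (nat \<times> nat \<times> nat) set" where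
  "ranked_essential_set m n A = {(i, j, rank_at A i j) | i j. (i, j) \<in> essential_set m n A}"

end

theory Submission
  imports Defs
begin

text \<open>In a polyomino no 1 lies weakly north-west of an unshaded position (i, j): row i has a 1
  to the right of column j, and a path of adjacent 1's from a north-west 1 to it would have to
  leave the quadrant [1..i] x [1..j] through row i or column j, which carry no 1's up to (i, j).
  So the diagram is a down-set, i.e. a Ferrers array whose lower right corners form the essential
  set, and all ranks vanish. The corners determine the Ferrers array, hence polyominoes with the
  same ranked essential set have the same diagram. Within C(R, S) the diagram determines the
  matrix row by row: given the rows above row i, column sums and column convexity force the first
  1 of row i, and row convexity and the row sum then fix the whole row.\<close>

lemma adj_ones_step_stays_northwest:
  assumes "(i, j) \<in> diagram m n A" and "((a, b), (a', b')) \<in> adj_ones m n A"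
    and "a \<le> i" and "b \<le> j"
  shows "a' \<le> i \<and> b' \<le> j"
proof -
  have "\<not> A i b" and "\<not> A a j" and "A a b" "1 \<le> a" "1 \<le> b"
    using assms by (auto simp: diagram_def adj_ones_def ones_def)
  then have "a < i \<or> b \<noteq> b'" "b < j \<or> a \<noteq> a'"
    using \<open>a \<le> i\<close> \<open>b \<le> j\<close> by (auto simp: le_less)
  then show ?thesis
    using assms(2-4) by (auto simp: adj_ones_def)
qed

lemma connected_diagram_northwest_zero:
  assumes "is_01mat m n A" and conn: "connected_mat m n A"
    and diag: "(i, j) \<in> diagram m n A" and "a \<le> i" and "b \<le> j"
  shows "\<not> A a b"
proof
  assume "A a b"
  have "i \<in> {1..m}" using diag by (simp add: diagram_def)
  then obtain c where "c \<in> {1..n}" and "A i c"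
    using conn unfolding connected_mat_def by blast
  have "j < c"
  proof (rule ccontr)
    assume "\<not> j < c"
    then show False
      using diag \<open>c \<in> {1..n}\<close> \<open>A i c\<close> by (auto simp: diagram_def)
  qed
  have "(a, b) \<in> ones m n A" "(i, c) \<in> ones m n A"
    using \<open>is_01mat m n A\<close> \<open>A a b\<close> \<open>A i c\<close> by (auto simp: is_01mat_def ones_def)
  then have "((a, b), (i, c)) \<in> (adj_ones m n A)\<^sup>*"
    using conn by (auto simp: connected_mat_def)
  moreover have "fst q \<le> i \<and> snd q \<le> j" if "((a, b), q) \<in> (adj_ones m n A)\<^sup>*" for q
    using that
  proof (induction rule: rtrancl_induct)
    case base
    then show ?case using \<open>a \<le> i\<close> \<open>b \<le> j\<close> by simp
  next
    case (step p q)
    then show ?case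
      using adj_ones_step_stays_northwest[OF diag, of "fst p" "snd p" "fst q" "snd q"] by simp
  qed
  ultimately show False
    using \<open>j < c\<close> by fastforce
qed

lemma polyomino_diagram_down_closed:
  assumes "polyomino m n A" and "(i, j) \<in> diagram m n A"
    and "1 \<le> i'" "i' \<le> i" "1 \<le> j'" "j' \<le> j"
  shows "(i', j') \<in> diagram m n A"
proof -
  have "\<not> A a b" if "a \<le> i" "b \<le> j" for a b
    using connected_diagram_northwest_zero[of m n A i j a b] assms that
    by (simp add: polyomino_def)
  then show ?thesis
    using assms(2-) by (auto simp: diagram_def)
qed

lemma polyomino_rank_at_diagram:
  assumes "polyomino m n A" and "(i, j) \<in> diagram m n A"
  shows "rank_at A i j = 0"
proof -
  have "\<not> A a b" if "a \<le> i" "b \<le> j" for a b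
    using connected_diagram_northwest_zero[of m n A i j a b] assms that
    by (simp add: polyomino_def)
  then have "{(i', j'). 1 \<le> i' \<and> i' \<le> i \<and> 1 \<le> j' \<and> j' \<le> j \<and> A i' j'} = {}"
    by auto
  then show ?thesis
    unfolding rank_at_def by (metis card.empty)
qed

lemma down_closed_eq_atLeastAtMost_card:
  fixes S :: "nat set"
  assumes "finite S" and "0 \<notin> S" and "\<And>x y. x \<in> S \<Longrightarrow> 1 \<le> y \<Longrightarrow> y \<le> x \<Longrightarrow> y \<in> S"
  shows "S = {1..card S}"
proof (cases "S = {}")
  case False
  then have "Max S \<in> S" using \<open>finite S\<close> by simp
  have "S = {1..Max S}"
  proof
    show "S \<subseteq> {1..Max S}"
      using assms(1,2) by (auto simp: Suc_le_eq intro: gr0I)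
    show "{1..Max S} \<subseteq> S"
      using assms(3)[OF \<open>Max S \<in> S\<close>] by auto
  qed
  then show ?thesis
    by (metis card_atLeastAtMost diff_Suc_1)
qed simp

lemma down_closed_eq_ferrers:
  assumes bounded: "D \<subseteq> {1..m} \<times> {1..n}"
    and down: "\<And>i j i' j'. (i, j) \<in> D \<Longrightarrow> 1 \<le> i' \<Longrightarrow> i' \<le> i \<Longrightarrow> 1 \<le> j' \<Longrightarrow> j' \<le> j
                 \<Longrightarrow> (i', j') \<in> D"
  defines "U \<equiv> \<lambda>i. card {j. (i, j) \<in> D}"
  shows "nonincr_vec m U" and "D = ferrers m U"
proof -
  have finite_row: "finite {j. (i, j) \<in> D}" for i
    by (rule finite_subset[of _ "{1..n}"]) (use bounded in auto)
  have row: "{j. (i, j) \<in> D} = {1..U i}" for i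
    unfolding U_def
  proof (rule down_closed_eq_atLeastAtMost_card[OF finite_row])
    show "0 \<notin> {j. (i, j) \<in> D}" using bounded by auto
  next
    fix x y assume "x \<in> {j. (i, j) \<in> D}" "1 \<le> y" "y \<le> x"
    then have "(i, x) \<in> D" and "1 \<le> i" using bounded by auto
    then show "y \<in> {j. (i, j) \<in> D}"
      using down \<open>1 \<le> y\<close> \<open>y \<le> x\<close> by blast
  qed
  have "(i, j) \<in> D \<longleftrightarrow> 1 \<le> i \<and> i \<le> m \<and> j \<in> {j. (i, j) \<in> D}" for i j
    using bounded by auto
  then show "D = ferrers m U"
    unfolding row by (auto simp: ferrers_def)
  show "nonincr_vec m U"
    unfolding nonincr_vec_def
  proof clarify
    fix i assume "1 \<le> i" "i < m"
    have "{j. (i + 1, j) \<in> D} \<subseteq> {j. (i, j) \<in> D}"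
      using down[of "i + 1" _ i] bounded \<open>1 \<le> i\<close> by auto
    then show "U (i + 1) \<le> U i"
      unfolding U_def using finite_row by (rule card_mono[rotated])
  qed
qed

lemma mem_lr_corners:
  "(i, j) \<in> lr_corners m U \<longleftrightarrow>
     1 \<le> i \<and> i \<le> m \<and> j = U i \<and> (if i = m then 0 else U (i + 1)) < U i"
  by (auto simp: lr_corners_def)

lemma ferrers_essential_eq_lr_corners:
  "{(i, j). (i, j) \<in> ferrers m U \<and> (i + 1, j) \<notin> ferrers m U \<and> (i, j + 1) \<notin> ferrers m U}
     = lr_corners m U"
proof -
  have "(i, j) \<in> ferrers m U \<and> (i + 1, j) \<notin> ferrers m U \<and> (i, j + 1) \<notin> ferrers m U
          \<longleftrightarrow> (i, j) \<in> lr_corners m U" for i j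
    by (cases "i = m") (auto simp: ferrers_def mem_lr_corners)
  then show ?thesis by auto
qed

lemma nonincr_vec_antimono:
  assumes "nonincr_vec m U" and "1 \<le> i" and "i \<le> a" and "a \<le> m"
  shows "U a \<le> U i"
  using \<open>i \<le> a\<close> \<open>a \<le> m\<close>
proof (induction a rule: dec_induct)
  case (step k)
  then have "U (k + 1) \<le> U k"
    using assms(1,2) by (simp add: nonincr_vec_def)
  then show ?case
    using step by simp
qed simp

lemma ferrers_eq_down_closure_lr_corners:
  assumes "nonincr_vec m U"
  shows "ferrers m U = {(i, j). 1 \<le> i \<and> 1 \<le> j \<and> (\<exists>(a, b) \<in> lr_corners m U. i \<le> a \<and> j \<le> b)}"
proof (intro set_eqI iffI; clarify)
  fix i j assume "(i, j) \<in> ferrers m U"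
  then have ij: "1 \<le> i" "i \<le> m" "1 \<le> j" "j \<le> U i"
    by (auto simp: ferrers_def)
  \<comment> \<open>the last row at or below row i that still reaches column j ends in a corner\<close>
  define a where "a = Max {a. i \<le> a \<and> a \<le> m \<and> j \<le> U a}"
  have "a \<in> {a. i \<le> a \<and> a \<le> m \<and> j \<le> U a}"
    unfolding a_def using ij by (intro Max_in) auto
  moreover have "a + 1 \<notin> {a. i \<le> a \<and> a \<le> m \<and> j \<le> U a}"
    using Max_ge[of "{a. i \<le> a \<and> a \<le> m \<and> j \<le> U a}" "a + 1"] unfolding a_def by fastforce
  ultimately have "(a, U a) \<in> lr_corners m U" and "i \<le> a" "j \<le> U a"
    using ij by (auto simp: mem_lr_corners)
  then show "1 \<le> i \<and> 1 \<le> j \<and> (\<exists>(a, b) \<in> lr_corners m U. i \<le> a \<and> j \<le> b)"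
    using ij by blast
next
  fix i j a b assume "1 \<le> i" "1 \<le> j" "(a, b) \<in> lr_corners m U" "i \<le> a" "j \<le> b"
  then show "(i, j) \<in> ferrers m U"
    using nonincr_vec_antimono[OF assms \<open>1 \<le> i\<close> \<open>i \<le> a\<close>]
    by (auto simp: ferrers_def mem_lr_corners)
qed

lemma ferrers_eq_if_lr_corners_eq:
  assumes "nonincr_vec m U" and "nonincr_vec m V" and "lr_corners m U = lr_corners m V"
  shows "ferrers m U = ferrers m V"
  using assms by (simp add: ferrers_eq_down_closure_lr_corners)

lemma polyomino_diagram_eq_ferrers:
  assumes "polyomino m n A"
  obtains U where "nonincr_vec m U" and "diagram m n A = ferrers m U"
    and "essential_set m n A = lr_corners m U"
proof -
  let ?U = "\<lambda>i. card {j. (i, j) \<in> diagram m n A}"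
  have "diagram m n A \<subseteq> {1..m} \<times> {1..n}"
    by (auto simp: diagram_def)
  note ferrers = down_closed_eq_ferrers[OF this]
  obtain U where "nonincr_vec m U" and D: "diagram m n A = ferrers m U"
  proof
    show "nonincr_vec m ?U"
      by (rule ferrers(1)) (rule polyomino_diagram_down_closed[OF assms])
    show "diagram m n A = ferrers m ?U"
      by (rule ferrers(2)) (rule polyomino_diagram_down_closed[OF assms])
  qed
  moreover have "essential_set m n A = lr_corners m U"
    unfolding essential_set_def D by (fact ferrers_essential_eq_lr_corners)
  ultimately show ?thesis ..
qed

lemma polyomino_ranked_essential_set:
  assumes "polyomino m n A"
  shows "ranked_essential_set m n A = {(i, j, 0) | i j. (i, j) \<in> essential_set m n A}"
proof -
  have "rank_at A i j = 0" if "(i, j) \<in> essential_set m n A" for i j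
    using polyomino_rank_at_diagram[OF assms] that by (simp add: essential_set_def)
  then show ?thesis
    unfolding ranked_essential_set_def by (intro Collect_cong) auto
qed

lemma essential_set_eq_image_ranked_essential_set:
  "essential_set m n A = (\<lambda>(i, j, r). (i, j)) ` ranked_essential_set m n A"
  unfolding ranked_essential_set_def by force

lemma polyomino_diagram_eq_if_essential_set_eq:
  assumes "polyomino m n A" and "polyomino m n B"
    and "essential_set m n A = essential_set m n B"
  shows "diagram m n A = diagram m n B"
proof -
  obtain U where "nonincr_vec m U" "diagram m n A = ferrers m U" "essential_set m n A = lr_corners m U"
    using polyomino_diagram_eq_ferrers[OF assms(1)] .
  moreover obtain V where "nonincr_vec m V" "diagram m n B = ferrers m V" "essential_set m n B = lr_corners m V"
    using polyomino_diagram_eq_ferrers[OF assms(2)] .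
  ultimately show ?thesis
    using ferrers_eq_if_lr_corners_eq assms(3) by metis
qed

lemma convex_set_eq_atLeastLessThan:
  fixes S :: "nat set"
  assumes "finite S" and "S \<noteq> {}"
    and convex: "\<And>x y z. x \<in> S \<Longrightarrow> z \<in> S \<Longrightarrow> x \<le> y \<Longrightarrow> y \<le> z \<Longrightarrow> y \<in> S"
  shows "S = {Min S..<Min S + card S}"
proof -
  have "Min S \<in> S" "Max S \<in> S" "Min S \<le> Max S"
    using assms(1,2) by simp_all
  have S: "S = {Min S..Max S}"
  proof
    show "S \<subseteq> {Min S..Max S}"
      using assms(1) by auto
    show "{Min S..Max S} \<subseteq> S"
      using convex[OF \<open>Min S \<in> S\<close> \<open>Max S \<in> S\<close>] by auto
  qed
  then have "Min S + card S = Suc (Max S)"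
    using \<open>Min S \<le> Max S\<close> by (metis card_atLeastAtMost Suc_diff_le le_add_diff_inverse le_SucI)
  then show ?thesis
    using S by (simp add: atLeastLessThanSuc_atLeastAtMost)
qed

lemma convex_mat_row:
  assumes "convex_mat m n A" and "is_01mat m n A"
    and "A i x" and "A i z" and "x \<le> y" and "y \<le> z"
  shows "A i y"
proof -
  have "i \<in> {1..m}" "1 \<le> x" "z \<le> n"
    using assms(2-4) by (auto simp: is_01mat_def)
  then show ?thesis
    using assms(1,3-) unfolding convex_mat_def by blast
qed

lemma convex_mat_col:
  assumes "convex_mat m n A" and "is_01mat m n A"
    and "A x j" and "A z j" and "x \<le> y" and "y \<le> z"
  shows "A y j"
proof -
  have "j \<in> {1..n}" "1 \<le> x" "z \<le> m"
    using assms(2-4) by (auto simp: is_01mat_def)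
  then show ?thesis
    using assms(1,3-) unfolding convex_mat_def by blast
qed

lemma convex_class_one_weakly_left:
  assumes A: "A \<in> convex_class m n R S" and B: "B \<in> convex_class m n R S"
    and diag: "diagram m n A = diagram m n B" and above: "\<forall>k<i. A k = B k"
    and "A i j"
  shows "\<exists>j'\<ge>1. j' \<le> j \<and> B i j'"
proof (rule ccontr)
  assume none: "\<not> (\<exists>j'\<ge>1. j' \<le> j \<and> B i j')"
  have ij: "1 \<le> i" "i \<le> m" "1 \<le> j" "j \<le> n"
    using A \<open>A i j\<close> by (auto simp: convex_class_def is_01mat_def)
  then have "\<not> B i j"
    using none by auto
  show False
  proof (cases "\<exists>k\<ge>1. k < i \<and> A k j")
    case False
    then have "(i, j) \<in> diagram m n B"
      using none \<open>\<not> B i j\<close> above ij by (auto simp: diagram_def le_less)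
    then have "(i, j) \<in> diagram m n A"
      using diag by simp
    then show False
      using \<open>A i j\<close> ij by (auto simp: diagram_def)
  next
    case True
    \<comment> \<open>then column j of B lies strictly above row i, inside column j of A but missing (i, j)\<close>
    then obtain k where "k < i" "B k j"
      using above by auto
    have "is_01mat m n B" "convex_mat m n B"
      using B by (simp_all add: convex_class_def)
    have "{k \<in> {1..m}. B k j} \<subseteq> {k. k < i}"
    proof clarify
      fix k' assume "B k' j"
      show "k' < i"
      proof (rule ccontr)
        assume "\<not> k' < i"
        then have "B i j"
          using convex_mat_col[OF \<open>convex_mat m n B\<close> \<open>is_01mat m n B\<close> \<open>B k j\<close> \<open>B k' j\<close>] \<open>k < i\<close>
          by simp
        then show False
          using \<open>\<not> B i j\<close> by simp
      qed
    qed
    then have "{k \<in> {1..m}. B k j} \<subset> {k \<in> {1..m}. A k j}"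
      using above \<open>A i j\<close> \<open>\<not> B i j\<close> ij by auto
    then have "card {k \<in> {1..m}. B k j} < card {k \<in> {1..m}. A k j}"
      by (rule psubset_card_mono[rotated]) simp
    moreover have "card {k \<in> {1..m}. B k j} = card {k \<in> {1..m}. A k j}"
      using A B ij by (simp add: convex_class_def)
    ultimately show False
      by simp
  qed
qed

lemma convex_class_row_eq:
  assumes A: "A \<in> convex_class m n R S" and B: "B \<in> convex_class m n R S"
    and diag: "diagram m n A = diagram m n B" and above: "\<forall>k<i. A k = B k"
  shows "A i = B i"
proof -
  have row: "{j. X i j} = {j \<in> {1..n}. X i j}" if "X \<in> convex_class m n R S" for X
    using that by (auto simp: convex_class_def is_01mat_def)
  have finite_row: "finite {j. X i j}" if "X \<in> convex_class m n R S" for X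
    unfolding row[OF that] by simp
  have Min_le: "{j. Y i j} \<noteq> {} \<and> Min {j. Y i j} \<le> Min {j. X i j}"
    if X: "X \<in> convex_class m n R S" and Y: "Y \<in> convex_class m n R S"
      and XY: "diagram m n X = diagram m n Y" "\<forall>k<i. X k = Y k" and "{j. X i j} \<noteq> {}" for X Y
  proof -
    have "X i (Min {j. X i j})"
      using Min_in[OF finite_row[OF X] \<open>{j. X i j} \<noteq> {}\<close>] by simp
    then obtain j' where "Y i j'" "j' \<le> Min {j. X i j}"
      using convex_class_one_weakly_left[OF X Y XY] by blast
    then show ?thesis
      using Min_le[OF finite_row[OF Y], of j'] by auto
  qed
  have interval: "{j. X i j} = {Min {j. X i j}..<Min {j. X i j} + card {j. X i j}}"
    if X: "X \<in> convex_class m n R S" and "{j. X i j} \<noteq> {}" for X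
  proof (rule convex_set_eq_atLeastLessThan[OF finite_row[OF X] that(2)])
    fix x y z assume "x \<in> {j. X i j}" "z \<in> {j. X i j}" "x \<le> y" "y \<le> z"
    then show "y \<in> {j. X i j}"
      using X convex_mat_row[of m n X i x z y] by (simp add: convex_class_def)
  qed
  have card_eq: "card {j. A i j} = card {j. B i j}"
  proof (cases "i \<in> {1..m}")
    case True
    then show ?thesis
      using A B by (simp add: row convex_class_def)
  next
    case False
    then have "{j. A i j} = {}" "{j. B i j} = {}"
      using A B by (auto simp: convex_class_def is_01mat_def)
    then show ?thesis
      by simp
  qed
  have "{j. A i j} = {j. B i j}"
  proof (cases "{j. A i j} = {}")
    case True
    then show ?thesis
      using card_eq finite_row[OF B] by simp
  next
    case False
    have above': "\<forall>k<i. B k = A k"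
      using above by simp
    have "{j. B i j} \<noteq> {}" and Min_eq: "Min {j. A i j} = Min {j. B i j}"
      using Min_le[OF A B diag above False] Min_le[OF B A diag[symmetric] above'] by auto
    have "{j. A i j} = {Min {j. A i j}..<Min {j. A i j} + card {j. A i j}}"
      by (rule interval[OF A False])
    also have "\<dots> = {Min {j. B i j}..<Min {j. B i j} + card {j. B i j}}"
      by (simp only: Min_eq card_eq)
    also have "\<dots> = {j. B i j}"
      by (rule interval[OF B \<open>{j. B i j} \<noteq> {}\<close>, symmetric])
    finally show ?thesis .
  qed
  then show ?thesis
    by auto
qed

lemma convex_class_eq_if_diagram_eq:
  assumes A: "A \<in> convex_class m n R S" and B: "B \<in> convex_class m n R S"
    and diag: "diagram m n A = diagram m n B"
  shows "A = B"
proof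
  show "A i = B i" for i
  proof (induction i rule: less_induct)
    case (less i)
    then show ?case
      using convex_class_row_eq[OF A B diag] by blast
  qed
qed

theorem mainTheorem2:
  shows "(\<forall>m n A. polyomino m n A \<longrightarrow>
            (\<exists>U. nonincr_vec m U \<and> diagram m n A = ferrers m U \<and>
                 ranked_essential_set m n A = {(i, j, 0) | i j. (i, j) \<in> lr_corners m U})) \<and>
         (\<forall>m n (R :: nat \<Rightarrow> nat) (S :: nat \<Rightarrow> nat) A B.
            A \<in> convex_class m n R S \<and> B \<in> convex_class m n R S \<and>
            polyomino m n A \<and> polyomino m n B \<and>
            ranked_essential_set m n A = ranked_essential_set m n B \<longrightarrow> A = B)"
proof (intro conjI allI impI)
  fix m n A assume "polyomino m n A"
  then obtain U where "nonincr_vec m U" "diagram m n A = ferrers m U"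
    and "essential_set m n A = lr_corners m U"
    by (rule polyomino_diagram_eq_ferrers)
  then show "\<exists>U. nonincr_vec m U \<and> diagram m n A = ferrers m U \<and>
               ranked_essential_set m n A = {(i, j, 0) | i j. (i, j) \<in> lr_corners m U}"
    using polyomino_ranked_essential_set[OF \<open>polyomino m n A\<close>] by auto
next
  fix m n and R S :: "nat \<Rightarrow> nat" and A B
  assume hyps: "A \<in> convex_class m n R S \<and> B \<in> convex_class m n R S \<and>
    polyomino m n A \<and> polyomino m n B \<and> ranked_essential_set m n A = ranked_essential_set m n B"
  then have "essential_set m n A = essential_set m n B"
    by (simp add: essential_set_eq_image_ranked_essential_set)
  then have "diagram m n A = diagram m n B"
    using polyomino_diagram_eq_if_essential_set_eq hyps by blast
  then show "A = B"
    using convex_class_eq_if_diagram_eq hyps by blast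
qed

end
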